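(* For any $\alpha, \varepsilon \in (0,1]$ there exists $n_0$ such that for all $n \geq n_0$ the following holds. Let $G$ be an $n$-vertex graph with $\alpha \binom{n}{2}$ edges. Then \[\operatorname{ssp}(G) \geq (\sqrt{3 \alpha + 1} - 1 - \varepsilon)n.\]
   Context: A family $\mathcal{P}$ of paths in a graph $G$ is strong-separating if for every ordered pair of distinct edges $e,f$ of $G$ there is a path in $\mathcal{P}$ containing $e$ but not $f$; $\operatorname{ssp}(G)$ is the minimum size of such a family. *)

theory Defs
  imports Complex_Main
begin

definition simple_graph :: "nat \<Rightarrow> nat set set \<Rightarrow> bool" where
  "simple_graph n E \<longleftrightarrow> (\<forall>e\<in>E. \<exists>u v. u < n \<and> v < n \<and> u \<noteq> v \<and> e = {u, v})"

definition path_edges :: "nat list \<Rightarrow> nat set set" where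
  "path_edges vs = set (map (\<lambda>(u, v). {u, v}) (zip vs (tl vs)))"

definition is_path :: "nat \<Rightarrow> nat set set \<Rightarrow> nat set set \<Rightarrow> bool" where
  "is_path n E P \<longleftrightarrow> (\<exists>vs. vs \<noteq> [] \<and> distinct vs \<and> set vs \<subseteq> {..<n}
      \<and> path_edges vs \<subseteq> E \<and> P = path_edges vs)"

definition strong_separating :: "nat \<Rightarrow> nat set set \<Rightarrow> nat set set set \<Rightarrow> bool" where
  "strong_separating n E \<P> \<longleftrightarrow> (\<forall>P\<in>\<P>. is_path n E P) \<and>
     (\<forall>e\<in>E. \<forall>f\<in>E. e \<noteq> f \<longrightarrow> (\<exists>P\<in>\<P>. e \<in> P \<and> f \<notin> P))"

definition ssp :: "nat \<Rightarrow> nat set set \<Rightarrow> nat" where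
  "ssp n E = (LEAST k. \<exists>\<P>. finite \<P> \<and> card \<P> = k \<and> strong_separating n E \<P>)"

end

theory Submission
  imports Defs
begin

text \<open>
  Let \<open>\<P>\<close> be a strong-separating family of \<open>k\<close> paths and assign to each edge \<open>e\<close> the
  set of paths through it. Strong separation makes this map injective, so at most
  \<open>1 + k + k choose 2\<close> edges lie on fewer than three paths, and all other edges are
  counted at least three times in \<open>\<Sum>\<^sub>P |P| \<le> k n\<close>. Hence
  \<open>3 |E| \<le> k n + 3 + 2 k + k choose 2\<close>; with \<open>|E| = \<alpha> n choose 2\<close> this says
  \<open>(k + n)\<^sup>2 \<ge> (3 \<alpha> + 1) n\<^sup>2 - O(n)\<close>, i.e. \<open>k \<ge> (sqrt (3 \<alpha> + 1) - 1 - \<epsilon>) n\<close> for large \<open>n\<close>.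
\<close>

lemma card_level_le_choose:
  assumes "finite B" "inj_on S A" "\<And>a. a \<in> A \<Longrightarrow> S a \<subseteq> B"
  shows "card {a\<in>A. card (S a) = j} \<le> card B choose j"
proof -
  have "card {a\<in>A. card (S a) = j} \<le> card {X. X \<subseteq> B \<and> card X = j}"
    using assms by (intro card_inj_on_le[where f = S]) (auto intro: inj_on_subset)
  also have "\<dots> = card B choose j"
    using assms(1) by (rule n_subsets)
  finally show ?thesis .
qed

lemma inj_subset_family_card_le:
  assumes B: "finite B" and S: "inj_on S A" "\<And>a. a \<in> A \<Longrightarrow> S a \<subseteq> B"
  shows "3 * card A \<le> (\<Sum>a\<in>A. card (S a)) + 3 + 2 * card B + (card B choose 2)"
proof -
  have A: "finite A"
    using inj_on_finite[OF S(1) _ finite_Pow_iff[THEN iffD2, OF B]] S(2) by blast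
  let ?level = "\<lambda>j. card {a\<in>A. card (S a) = j}"
  have "3 * card A = (\<Sum>a\<in>A. 3::nat)"
    by simp
  also have "\<dots> \<le> (\<Sum>a\<in>A. card (S a) + 3 * of_bool (card (S a) = 0)
                     + 2 * of_bool (card (S a) = 1) + of_bool (card (S a) = 2))"
    by (intro sum_mono) auto
  also have "\<dots> = (\<Sum>a\<in>A. card (S a)) + 3 * ?level 0 + 2 * ?level 1 + ?level 2"
    using A by (simp add: sum.distrib Int_def conj_commute flip: sum_distrib_left)
  also have "\<dots> \<le> (\<Sum>a\<in>A. card (S a)) + 3 + 2 * card B + (card B choose 2)"
    using card_level_le_choose[OF assms, of 0] card_level_le_choose[OF assms, of 1]
      card_level_le_choose[OF assms, of 2]
    by simp
  finally show ?thesis .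
qed

lemma is_path_card_le:
  assumes "is_path n E P"
  shows "finite P" "card P \<le> n"
proof -
  obtain vs where vs: "distinct vs" "set vs \<subseteq> {..<n}" "P = path_edges vs"
    using assms unfolding is_path_def by blast
  then show "finite P"
    by (simp add: path_edges_def)
  have "card P \<le> length (zip vs (tl vs))"
    unfolding vs(3) path_edges_def by (metis card_length length_map)
  also have "\<dots> \<le> card (set vs)"
    using vs(1) by (simp add: distinct_card)
  also have "\<dots> \<le> n"
    using vs(2) by (metis card_lessThan card_mono finite_lessThan)
  finally show "card P \<le> n" .
qed

lemma strong_separating_inj_on_paths_through:
  assumes "strong_separating n E \<P>"
  shows "inj_on (\<lambda>e. {P\<in>\<P>. e \<in> P}) E"
proof (rule inj_onI, rule ccontr)
  fix e f
  assume "e \<in> E" "f \<in> E" "e \<noteq> f" and same: "{P\<in>\<P>. e \<in> P} = {P\<in>\<P>. f \<in> P}"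
  then obtain P where "P \<in> \<P>" "e \<in> P" "f \<notin> P"
    using assms unfolding strong_separating_def by blast
  with same show False
    by blast
qed

lemma strong_separating_sum_paths_through_le:
  assumes "finite \<P>" "finite E" "strong_separating n E \<P>"
  shows "(\<Sum>e\<in>E. card {P\<in>\<P>. e \<in> P}) \<le> card \<P> * n"
proof -
  have "(\<Sum>e\<in>E. card {P\<in>\<P>. e \<in> P}) = (\<Sum>e\<in>E. \<Sum>P\<in>\<P>. of_bool (e \<in> P))"
    using assms(1) by (simp add: Int_def conj_commute)
  also have "\<dots> = (\<Sum>P\<in>\<P>. card {e\<in>E. e \<in> P})"
    using assms(2) by (subst sum.swap) (simp add: Int_def conj_commute)
  also have "\<dots> \<le> (\<Sum>P\<in>\<P>. n)"
  proof (rule sum_mono)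
    fix P
    assume "P \<in> \<P>"
    then have "is_path n E P"
      using assms(3) unfolding strong_separating_def by blast
    then have "card {e\<in>E. e \<in> P} \<le> card P" "card P \<le> n"
      by (auto intro: card_mono dest: is_path_card_le)
    then show "card {e\<in>E. e \<in> P} \<le> n"
      by linarith
  qed
  finally show ?thesis
    by simp
qed

lemma strong_separating_card_edges_le:
  assumes "finite \<P>" "strong_separating n E \<P>"
  shows "3 * card E \<le> card \<P> * n + 3 + 2 * card \<P> + (card \<P> choose 2)"
proof -
  let ?through = "\<lambda>e. {P\<in>\<P>. e \<in> P}"
  have inj: "inj_on ?through E"
    using assms(2) by (rule strong_separating_inj_on_paths_through)
  have "finite E"
    using inj_on_finite[OF inj, of "Pow \<P>"] assms(1) by blast
  with assms have "(\<Sum>e\<in>E. card (?through e)) \<le> card \<P> * n"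
    by (intro strong_separating_sum_paths_through_le)
  moreover have "3 * card E \<le> (\<Sum>e\<in>E. card (?through e)) + 3 + 2 * card \<P> + (card \<P> choose 2)"
    using assms(1) inj by (rule inj_subset_family_card_le) blast
  ultimately show ?thesis
    by linarith
qed

lemma simple_graph_finite:
  assumes "simple_graph n E"
  shows "finite E"
proof -
  have "E \<subseteq> Pow {..<n}"
    using assms unfolding simple_graph_def by fastforce
  then show ?thesis
    by (rule finite_subset) simp
qed

lemma strong_separating_singletons:
  assumes "simple_graph n E"
  shows "strong_separating n E ((\<lambda>e. {e}) ` E)"
  unfolding strong_separating_def
proof (intro conjI ballI impI)
  fix P
  assume "P \<in> (\<lambda>e. {e}) ` E"
  then obtain e where e: "e \<in> E" "P = {e}"
    by blast
  then obtain u v where "u < n" "v < n" "u \<noteq> v" "e = {u, v}"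
    using assms unfolding simple_graph_def by blast
  with e show "is_path n E P"
    unfolding is_path_def by (intro exI[of _ "[u, v]"]) (auto simp: path_edges_def)
qed auto

lemma ssp_attained:
  assumes "simple_graph n E"
  shows "\<exists>\<P>. finite \<P> \<and> card \<P> = ssp n E \<and> strong_separating n E \<P>"
proof -
  have "\<exists>k \<P>. finite \<P> \<and> card \<P> = k \<and> strong_separating n E \<P>"
    using simple_graph_finite[OF assms] strong_separating_singletons[OF assms] by blast
  then show ?thesis
    unfolding ssp_def by (rule LeastI_ex)
qed

lemma real_choose_two: "2 * real (n choose 2) = real n * (real n - 1)"
proof (cases n)
  case (Suc m)
  have "2 * (n choose 2) = n * m"
    unfolding choose_two Suc by simp
  then have "2 * real (n choose 2) = real n * real m"
    by (metis of_nat_mult of_nat_numeral)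
  then show ?thesis
    by (simp add: Suc)
qed simp

lemma sqrt_lower_bound_from_quadratic:
  fixes \<alpha> \<epsilon> n k :: real
  assumes \<alpha>: "0 < \<alpha>" "\<alpha> \<le> 1" and \<epsilon>: "0 < \<epsilon>" "\<epsilon> \<le> 1" and n: "1 \<le> n" "12 < \<epsilon> * n"
    and k: "0 \<le> k" and quadratic: "3 * \<alpha> * n * (n - 1) \<le> 2 * k * n + 6 + 4 * k + k * (k - 1)"
  shows "(sqrt (3 * \<alpha> + 1) - 1 - \<epsilon>) * n \<le> k"
proof (rule ccontr)
  define s where "s = sqrt (3 * \<alpha> + 1)"
  have s: "s\<^sup>2 = 3 * \<alpha> + 1" "1 \<le> s" "s \<le> 2"
    unfolding s_def using \<alpha> by (simp_all add: real_le_lsqrt real_sqrt_le_iff)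
  assume "\<not> ?thesis"
  then have k_less: "k + n < (s - \<epsilon>) * n"
    unfolding s_def by (simp add: algebra_simps)
  have "k < n"
    using k_less s(3) \<epsilon>(1) n(1) mult_right_mono[of "s - \<epsilon>" 2 n] by linarith
  have "(s - \<epsilon>)\<^sup>2 \<le> s\<^sup>2 - \<epsilon>"
    using mult_left_mono[of 1 "2 * s - \<epsilon>" \<epsilon>] s(2) \<epsilon> by (simp add: power2_eq_square algebra_simps)
  from mult_right_mono[OF this, of "n\<^sup>2"]
  have "((s - \<epsilon>) * n)\<^sup>2 \<le> (3 * \<alpha> + 1 - \<epsilon>) * n\<^sup>2"
    using s(1) by (simp add: power_mult_distrib)
  moreover have "(k + n)\<^sup>2 < ((s - \<epsilon>) * n)\<^sup>2"
    using k_less k n(1) by (intro power_strict_mono) auto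
  moreover have "(k + n)\<^sup>2 \<ge> (3 * \<alpha> + 1) * n\<^sup>2 - 3 * \<alpha> * n - 3 * k - 6"
    using quadratic by (simp add: power2_eq_square algebra_simps)
  ultimately have "\<epsilon> * n * n < 3 * \<alpha> * n + 3 * k + 6"
    by (simp add: power2_eq_square algebra_simps)
  also have "\<dots> \<le> 12 * n"
    using mult_right_mono[OF \<alpha>(2), of n] \<open>k < n\<close> n(1) by linarith
  finally have "\<epsilon> * n < 12"
    using n(1) by simp
  with n(2) show False
    by simp
qed

theorem proposition2p2:
  fixes \<alpha> \<epsilon> :: real
  assumes "0 < \<alpha>" "\<alpha> \<le> 1" "0 < \<epsilon>" "\<epsilon> \<le> 1"
  shows "\<exists>n0::nat. \<forall>n\<ge>n0. \<forall>E. simple_graph n E \<and> real (card E) = \<alpha> * real (n choose 2) \<longrightarrow>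
           real (ssp n E) \<ge> (sqrt (3 * \<alpha> + 1) - 1 - \<epsilon>) * real n"
proof (intro exI allI impI)
  fix n :: nat and E
  assume n: "nat \<lceil>12 / \<epsilon>\<rceil> + 1 \<le> n"
    and E: "simple_graph n E \<and> real (card E) = \<alpha> * real (n choose 2)"
  have "12 / \<epsilon> < real n"
    using n by linarith
  then have large: "12 < \<epsilon> * real n"
    using assms(3) by (simp add: field_simps)
  obtain \<P> where \<P>: "finite \<P>" "card \<P> = ssp n E" "strong_separating n E \<P>"
    using ssp_attained E by blast
  let ?k = "ssp n E"
  have "real (3 * card E) \<le> real (?k * n + 3 + 2 * ?k + (?k choose 2))"
    using strong_separating_card_edges_le[OF \<P>(1,3)] \<P>(2) by (simp only: of_nat_le_iff)
  then have "3 * real (card E) \<le> real ?k * n + 3 + 2 * real ?k + real (?k choose 2)"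
    by simp
  moreover have "3 * real (card E) * 2 = 3 * \<alpha> * real n * (real n - 1)"
    using E real_choose_two[of n] by simp
  ultimately have "3 * \<alpha> * real n * (real n - 1) \<le> 2 * real ?k * real n + 6 + 4 * real ?k + real ?k * (real ?k - 1)"
    using real_choose_two[of ?k] by linarith
  moreover have "1 \<le> real n"
    using n by simp
  ultimately show "real ?k \<ge> (sqrt (3 * \<alpha> + 1) - 1 - \<epsilon>) * real n"
    using assms large by (intro sqrt_lower_bound_from_quadratic) simp_all
qed

end
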